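(* Let $N\ge1$, $m>1$, $\alpha,\beta\in\mathbb R$ with $N+\alpha-m>0$ and $\beta-\alpha+1>0$; let $s_0\ge0$, $\lambda>0$ and $\wp>0$. Let $u\in C^1(s_0,\infty)$ be a nonnegative solution of $$-(r^{N+\alpha-1}|u'(r)|^{m-2}u'(r))'=\lambda r^{N+\beta-1}u^{\wp}(r),\ r\in(s_0,\infty),\qquad u(s_0)=1,\quad u'(s_0)\le0.$$ Let $\varrho=\frac{N+\alpha-m}{m-1}$. Then the function $U_\varrho(r):=ru'(r)+\varrho u(r)$ is nonnegative and nonincreasing on $(s_0,\infty)$. In particular, $r^\varrho u(r)$ is nondecreasing on $(s_0,\infty)$. *)

theory Defs
  imports "HOL-Analysis.Analysis"
begin

end

theory Submission
  imports Defs
begin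

text \<open>
  By the equation, the flux \<open>F(r) = r^(N+\<alpha>-1) |u'|^(m-2) u'\<close> is nonincreasing.
  Hence \<open>u' \<le> 0\<close>: if \<open>u'(r) > 0\<close>, then \<open>u' \<ge> u'(r)\<close> on \<open>(s0, r]\<close>, contradicting
  \<open>u'(s0) \<le> 0\<close>. And \<open>u'(r) = 0\<close> is impossible, since then \<open>F\<close> vanishes on \<open>(s0, r]\<close>,
  so \<open>u = u(s0) = 1\<close> there and \<open>F' < 0\<close>. Now \<open>u' < 0\<close> gives
  \<open>r u' = - r^(-\<rho>) (-F)^(1/(m-1))\<close>, so \<open>U = \<rho> u - r^(-\<rho>) (-F)^(1/(m-1))\<close>;
  differentiating this form, the terms containing \<open>u'\<close> cancel and only a nonnegative
  multiple of \<open>F' \<le> 0\<close> remains. Finally \<open>(r^\<rho> u)' = r^(\<rho>-1) U\<close>: if \<open>U(r0) = -c < 0\<close>,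
  then \<open>U \<le> -c\<close> beyond \<open>r0\<close> and \<open>r^\<rho> u(r) \<le> r0^\<rho> u(r0) - c (r^\<rho> - r0^\<rho>) / \<rho>\<close>
  becomes negative. Hence \<open>U \<ge> 0\<close> and \<open>r^\<rho> u\<close> is nondecreasing.
\<close>

lemma abs_powr_mult_self_pos:
  fixes x m :: real
  assumes "x > 0"
  shows "\<bar>x\<bar> powr (m - 2) * x = x powr (m - 1)"
proof -
  have "x powr (m - 1) = x powr ((m - 2) + 1)"
    by simp
  also have "\<dots> = x powr (m - 2) * x powr 1"
    by (rule powr_add)
  finally show ?thesis
    using assms by simp
qed

lemma abs_powr_mult_self_neg:
  fixes x m :: real
  assumes "x < 0"
  shows "\<bar>x\<bar> powr (m - 2) * x = - ((- x) powr (m - 1))"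
  using abs_powr_mult_self_pos[of "- x" m] assms by simp

lemma abs_powr_mult_self_strict_mono:
  fixes x y m :: real
  assumes "m > 1" and "x < y"
  shows "\<bar>x\<bar> powr (m - 2) * x < \<bar>y\<bar> powr (m - 2) * y"
proof -
  have pos: "\<bar>z\<bar> powr (m - 2) * z > 0" if "z > 0" for z
    using that by simp
  have neg: "\<bar>z\<bar> powr (m - 2) * z < 0" if "z < 0" for z
    using that by (simp add: mult_pos_neg)
  consider "0 < x" | "x \<le> 0" "0 \<le> y" | "y < 0"
    by linarith
  then show ?thesis
  proof cases
    case 1
    then show ?thesis
      using assms abs_powr_mult_self_pos[of x m] abs_powr_mult_self_pos[of y m]
      by (simp add: powr_less_mono2)
  next
    case 2
    have "\<bar>x\<bar> powr (m - 2) * x \<le> 0" "0 \<le> \<bar>y\<bar> powr (m - 2) * y"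
      using 2 by (simp_all add: mult_nonneg_nonpos)
    moreover have "x < 0 \<or> 0 < y"
      using 2 assms by linarith
    ultimately show ?thesis
      using pos[of y] neg[of x] by linarith
  next
    case 3
    then show ?thesis
      using assms abs_powr_mult_self_neg[of x m] abs_powr_mult_self_neg[of y m]
      by (simp add: powr_less_mono2)
  qed
qed

lemma abs_powr_mult_self_le_iff:
  fixes x y m :: real
  assumes "m > 1"
  shows "\<bar>x\<bar> powr (m - 2) * x \<le> \<bar>y\<bar> powr (m - 2) * y \<longleftrightarrow> x \<le> y"
  using abs_powr_mult_self_strict_mono[OF assms]
  by (metis linorder_not_less order_le_less)

lemma mono_on_greaterThan_if_derivative_nonneg:
  fixes f f' :: "real \<Rightarrow> real" and a :: real
  assumes "\<And>x. x > a \<Longrightarrow> (f has_real_derivative f' x) (at x)"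
    and "\<And>x. x > a \<Longrightarrow> f' x \<ge> 0"
  shows "mono_on {a<..} f"
proof (rule mono_onI)
  fix r t assume "r \<in> {a<..}" "t \<in> {a<..}" "r \<le> t"
  show "f r \<le> f t"
  proof (rule DERIV_nonneg_imp_nondecreasing[OF \<open>r \<le> t\<close>])
    fix x assume "r \<le> x" "x \<le> t"
    with \<open>r \<in> {a<..}\<close> have "x > a"
      by simp
    with assms show "\<exists>y. (f has_real_derivative y) (at x) \<and> y \<ge> 0"
      by blast
  qed
qed

lemma antimono_on_greaterThan_if_derivative_nonpos:
  fixes f f' :: "real \<Rightarrow> real" and a :: real
  assumes "\<And>x. x > a \<Longrightarrow> (f has_real_derivative f' x) (at x)"
    and "\<And>x. x > a \<Longrightarrow> f' x \<le> 0"
  shows "antimono_on {a<..} f"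
proof (rule monotone_onI)
  fix r t assume "r \<in> {a<..}" "t \<in> {a<..}" "r \<le> t"
  show "f t \<le> f r"
  proof (rule DERIV_nonpos_imp_nonincreasing[OF \<open>r \<le> t\<close>])
    fix x assume "r \<le> x" "x \<le> t"
    with \<open>r \<in> {a<..}\<close> have "x > a"
      by simp
    with assms show "\<exists>y. (f has_real_derivative y) (at x) \<and> y \<le> 0"
      by blast
  qed
qed

lemma right_derivative_ge_if_derivative_ge:
  fixes f f' :: "real \<Rightarrow> real" and a b c D :: real
  assumes "a < b" and "continuous_on {a..b} f"
    and right_deriv: "(f has_real_derivative D) (at a within {a..})"
    and deriv: "\<And>x. a < x \<Longrightarrow> x < b \<Longrightarrow> (f has_real_derivative f' x) (at x)"
    and bound: "\<And>x. a < x \<Longrightarrow> x < b \<Longrightarrow> c \<le> f' x"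
  shows "c \<le> D"
proof (rule ccontr)
  assume "\<not> c \<le> D"
  define g where "g x = f x - c * x" for x
  have "(g has_real_derivative D - c) (at a within {a..})"
    unfolding g_def using right_deriv by (auto intro!: derivative_eq_intros)
  moreover have "D - c < 0"
    using \<open>\<not> c \<le> D\<close> by simp
  ultimately obtain d where "d > 0"
    and decr: "\<forall>h > 0. a + h \<in> {a..} \<longrightarrow> h < d \<longrightarrow> g a > g (a + h)"
    by (blast dest: has_real_derivative_neg_dec_right)
  define h where "h = min (d / 2) (b - a)"
  have h: "0 < h" "h < d" "a + h \<le> b"
    using \<open>d > 0\<close> \<open>a < b\<close> unfolding h_def by auto
  have "g a \<le> g (a + h)"
  proof (rule DERIV_nonneg_imp_increasing_open[of a "a + h" g])
    have "continuous_on {a..a + h} f"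
      using h by (intro continuous_on_subset[OF assms(2)]) auto
    then show "continuous_on {a..a + h} g"
      unfolding g_def by (intro continuous_intros)
    fix x assume "a < x" "x < a + h"
    with h show "\<exists>y. (g has_real_derivative y) (at x) \<and> 0 \<le> y"
      unfolding g_def using deriv bound
      by (intro exI[of _ "f' x - c"]) (auto intro!: derivative_eq_intros)
  qed (use h in auto)
  moreover have "g (a + h) < g a"
    using decr h by simp
  ultimately show False
    by simp
qed

lemma has_real_derivative_powr_mult:
  fixes u :: "real \<Rightarrow> real" and x \<rho> D :: real
  assumes "x > 0" and "(u has_real_derivative D) (at x)"
  shows "((\<lambda>t. t powr \<rho> * u t) has_real_derivative x powr (\<rho> - 1) * (x * D + \<rho> * u x)) (at x)"
proof -
  have "x powr \<rho> = x powr (\<rho> - 1) * x"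
    using assms(1) by (simp add: powr_diff)
  then show ?thesis
    using DERIV_mult[OF has_real_derivative_powr[OF assms(1), of \<rho>] assms(2)]
    by (simp add: algebra_simps)
qed

lemma powr_mult_mono_if_Euler_operator_nonneg:
  fixes u u' :: "real \<Rightarrow> real" and a \<rho> :: real
  assumes "a \<ge> 0"
    and deriv: "\<And>x. x > a \<Longrightarrow> (u has_real_derivative u' x) (at x)"
    and nonneg: "\<And>x. x > a \<Longrightarrow> x * u' x + \<rho> * u x \<ge> 0"
  shows "mono_on {a<..} (\<lambda>x. x powr \<rho> * u x)"
  using assms has_real_derivative_powr_mult
  by (intro mono_on_greaterThan_if_derivative_nonneg
      [where f' = "\<lambda>x. x powr (\<rho> - 1) * (x * u' x + \<rho> * u x)"]) auto

lemma Euler_operator_nonneg: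
  fixes u u' :: "real \<Rightarrow> real" and a \<rho> x :: real
  assumes "\<rho> > 0" and "a \<ge> 0"
    and deriv: "\<And>x. x > a \<Longrightarrow> (u has_real_derivative u' x) (at x)"
    and nonneg: "\<And>x. x > a \<Longrightarrow> u x \<ge> 0"
    and antimono: "antimono_on {a<..} (\<lambda>x. x * u' x + \<rho> * u x)"
    and "x > a"
  shows "x * u' x + \<rho> * u x \<ge> 0"
proof (rule ccontr)
  define c where "c = - (x * u' x + \<rho> * u x)"
  assume "\<not> ?thesis"
  then have "c > 0"
    unfolding c_def by simp
  define g where "g t = t powr \<rho> * u t + c / \<rho> * t powr \<rho>" for t
  have g_decr: "g t \<le> g x" if "x \<le> t" for t
  proof (rule DERIV_nonpos_imp_nonincreasing[OF that])
    fix y assume "x \<le> y" "y \<le> t"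
    then have "y > a" "y > 0"
      using \<open>x > a\<close> \<open>a \<ge> 0\<close> by auto
    have "(g has_real_derivative y powr (\<rho> - 1) * (y * u' y + \<rho> * u y) + c / \<rho> * (\<rho> * y powr (\<rho> - 1))) (at y)"
      unfolding g_def using \<open>y > 0\<close> deriv[OF \<open>y > a\<close>]
      by (intro DERIV_add DERIV_cmult has_real_derivative_powr_mult has_real_derivative_powr)
    moreover have "y powr (\<rho> - 1) * (y * u' y + \<rho> * u y) + c / \<rho> * (\<rho> * y powr (\<rho> - 1))
        = y powr (\<rho> - 1) * ((y * u' y + \<rho> * u y) + c)"
      using \<open>\<rho> > 0\<close> by (simp add: algebra_simps)
    moreover have "(y * u' y + \<rho> * u y) + c \<le> 0"
      using monotone_onD[OF antimono, of x y] \<open>x \<le> y\<close> \<open>x > a\<close> \<open>y > a\<close>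
      unfolding c_def by simp
    ultimately show "\<exists>D. (g has_real_derivative D) (at y) \<and> D \<le> 0"
      by (metis mult_nonneg_nonpos powr_ge_zero)
  qed
  define K where "K = \<bar>\<rho> * g x / c\<bar> + 1"
  define t where "t = x + K powr (1 / \<rho>)"
  have "x \<le> t"
    unfolding t_def by simp
  have "K \<le> t powr \<rho>"
  proof -
    have "K = (K powr (1 / \<rho>)) powr \<rho>"
      using \<open>\<rho> > 0\<close> unfolding K_def by (simp add: powr_powr)
    also have "\<dots> \<le> t powr \<rho>"
      using \<open>\<rho> > 0\<close> \<open>x > a\<close> \<open>a \<ge> 0\<close> unfolding t_def by (intro powr_mono2) auto
    finally show ?thesis .
  qed
  then have "g x < c / \<rho> * t powr \<rho>"
    using \<open>c > 0\<close> \<open>\<rho> > 0\<close> unfolding K_def by (simp add: field_simps)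
  also have "\<dots> \<le> g t"
    unfolding g_def using nonneg[of t] \<open>x \<le> t\<close> \<open>x > a\<close> by simp
  finally show False
    using g_decr[OF \<open>x \<le> t\<close>] by simp
qed

definition radial_flux :: "real \<Rightarrow> real \<Rightarrow> (real \<Rightarrow> real) \<Rightarrow> real \<Rightarrow> real" where
  "radial_flux k m v t = t powr k * (\<bar>v t\<bar> powr (m - 2) * v t)"

lemma derivative_nonpos_if_radial_flux_antimono:
  fixes u u' :: "real \<Rightarrow> real" and a k m x :: real
  assumes "m > 1" and "k \<ge> 0" and "a \<ge> 0"
    and "continuous_on {a..} u"
    and right_deriv: "(u has_real_derivative u' a) (at a within {a..})" and "u' a \<le> 0"
    and deriv: "\<And>x. x > a \<Longrightarrow> (u has_real_derivative u' x) (at x)"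
    and flux_antimono: "antimono_on {a<..} (radial_flux k m u')"
    and "x > a"
  shows "u' x \<le> 0"
proof (rule ccontr)
  assume "\<not> u' x \<le> 0"
  have "u' x \<le> u' t" if "a < t" "t \<le> x" for t
  proof -
    have "t > 0"
      using that \<open>a \<ge> 0\<close> by simp
    have "t powr k * (\<bar>u' x\<bar> powr (m - 2) * u' x) \<le> x powr k * (\<bar>u' x\<bar> powr (m - 2) * u' x)"
      using \<open>t > 0\<close> \<open>t \<le> x\<close> \<open>k \<ge> 0\<close> \<open>\<not> u' x \<le> 0\<close>
      by (intro mult_right_mono powr_mono2) auto
    also have "\<dots> \<le> t powr k * (\<bar>u' t\<bar> powr (m - 2) * u' t)"
      using monotone_onD[OF flux_antimono, of t x] that \<open>x > a\<close>
      unfolding radial_flux_def by simp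
    finally show ?thesis
      using \<open>t > 0\<close> abs_powr_mult_self_le_iff[OF \<open>m > 1\<close>] by simp
  qed
  then have "u' x \<le> u' a"
    using \<open>x > a\<close> deriv
    by (intro right_derivative_ge_if_derivative_ge[OF \<open>x > a\<close> _ right_deriv, of u'])
      (auto intro: continuous_on_subset[OF \<open>continuous_on {a..} u\<close>])
  with \<open>u' a \<le> 0\<close> \<open>\<not> u' x \<le> 0\<close> show False
    by simp
qed

lemma derivative_neg_if_radial_flux_equation:
  fixes u u' :: "real \<Rightarrow> real" and a k m lam q p r :: real
  assumes "m > 1" and "a \<ge> 0" and "lam > 0"
    and "continuous_on {a..} u" and "u a > 0"
    and deriv: "\<And>x. x > a \<Longrightarrow> (u has_real_derivative u' x) (at x)"
    and flux_deriv: "\<And>x. x > a \<Longrightarrow>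
      (radial_flux k m u' has_real_derivative - lam * x powr q * u x powr p) (at x)"
    and nonpos: "\<And>x. x > a \<Longrightarrow> u' x \<le> 0"
    and "r > a"
  shows "u' r < 0"
proof (rule ccontr)
  assume "\<not> u' r < 0"
  then have "u' r = 0"
    using nonpos[OF \<open>r > a\<close>] by simp
  have flux_antimono: "antimono_on {a<..} (radial_flux k m u')"
    using flux_deriv \<open>lam > 0\<close> by (intro antimono_on_greaterThan_if_derivative_nonpos) auto
  have flux_nonpos: "radial_flux k m u' x \<le> 0" if "x > a" for x
    using nonpos[OF that] unfolding radial_flux_def by (simp add: mult_nonneg_nonpos)
  have flux_zero: "radial_flux k m u' x = 0" if "a < x" "x \<le> r" for x
  proof -
    have "radial_flux k m u' r \<le> radial_flux k m u' x"
      using monotone_onD[OF flux_antimono, of x r] that by simp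
    with flux_nonpos[OF \<open>a < x\<close>] \<open>u' r = 0\<close> show ?thesis
      unfolding radial_flux_def by simp
  qed
  have u_const: "u x = u a" if "a < x" "x \<le> r" for x
  proof (rule DERIV_isconst_end[OF \<open>a < x\<close>])
    show "continuous_on {a..x} u"
      by (rule continuous_on_subset[OF \<open>continuous_on {a..} u\<close>]) auto
    fix y assume "a < y" "y < x"
    with that have "u' y = 0"
      using flux_zero[of y] \<open>a \<ge> 0\<close> unfolding radial_flux_def by simp
    with deriv \<open>a < y\<close> show "(u has_real_derivative 0) (at y)"
      by metis
  qed
  define x where "x = (a + r) / 2"
  have "a < x" "x < r"
    using \<open>r > a\<close> unfolding x_def by auto
  then obtain z where "x < z" "z < r"
    and "radial_flux k m u' r - radial_flux k m u' x = (r - x) * (- lam * z powr q * u z powr p)"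
    using MVT2[of x r "radial_flux k m u'" "\<lambda>z. - lam * z powr q * u z powr p"] flux_deriv by force
  moreover have "lam * z powr q * u z powr p > 0"
    using \<open>x < z\<close> \<open>z < r\<close> \<open>a < x\<close> \<open>a \<ge> 0\<close> \<open>lam > 0\<close> \<open>u a > 0\<close> u_const[of z] by simp
  moreover have "radial_flux k m u' r = radial_flux k m u' x"
    using flux_zero[of x] flux_zero[of r] \<open>a < x\<close> \<open>x < r\<close> by simp
  ultimately show False
    using \<open>x < r\<close> by (auto simp: algebra_simps)
qed

lemma radial_flux_root:
  fixes v :: "real \<Rightarrow> real" and k m \<rho> x :: real
  assumes "m > 1" and "k = (\<rho> + 1) * (m - 1)" and "x > 0" and "v x < 0"
  shows "(- radial_flux k m v x) powr (1 / (m - 1)) = x powr (\<rho> + 1) * (- v x)"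
proof -
  have "- radial_flux k m v x = x powr k * (- v x) powr (m - 1)"
    using abs_powr_mult_self_neg[OF \<open>v x < 0\<close>] unfolding radial_flux_def by simp
  then have "(- radial_flux k m v x) powr (1 / (m - 1))
      = x powr (k / (m - 1)) * (- v x) powr ((m - 1) / (m - 1))"
    using assms by (simp add: powr_mult powr_powr)
  also have "\<dots> = x powr (\<rho> + 1) * (- v x)"
    using assms by simp
  finally show ?thesis .
qed

lemma Euler_operator_antimono:
  fixes u u' W :: "real \<Rightarrow> real" and a k m \<rho> :: real
  assumes "m > 1" and "a \<ge> 0" and k: "k = (\<rho> + 1) * (m - 1)"
    and deriv: "\<And>x. x > a \<Longrightarrow> (u has_real_derivative u' x) (at x)"
    and neg: "\<And>x. x > a \<Longrightarrow> u' x < 0"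
    and flux_deriv: "\<And>x. x > a \<Longrightarrow> (radial_flux k m u' has_real_derivative W x) (at x)"
    and W_nonpos: "\<And>x. x > a \<Longrightarrow> W x \<le> 0"
  shows "antimono_on {a<..} (\<lambda>x. x * u' x + \<rho> * u x)"
proof -
  define e where "e = 1 / (m - 1)"
  define F where "F = radial_flux k m u'"
  define H where "H x = \<rho> * u x - x powr (- \<rho>) * (- F x) powr e" for x
  have root: "(- F x) powr e = x powr (\<rho> + 1) * (- u' x)" if "x > a" for x
    unfolding F_def e_def using radial_flux_root[OF \<open>m > 1\<close> k] neg[OF that] that \<open>a \<ge> 0\<close> by simp
  have U_eq_H: "x * u' x + \<rho> * u x = H x" if "x > a" for x
  proof -
    have "x powr (- \<rho>) * x powr (\<rho> + 1) = x"
      using that \<open>a \<ge> 0\<close> by (simp flip: powr_add)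
    then show ?thesis
      unfolding H_def root[OF that] by (simp add: algebra_simps)
  qed
  have H_deriv: "(H has_real_derivative e * x powr (- \<rho>) * (- F x) powr (e - 1) * W x) (at x)"
    if "x > a" for x
  proof -
    have "x > 0"
      using that \<open>a \<ge> 0\<close> by simp
    have "- F x > 0"
      using abs_powr_mult_self_strict_mono[OF \<open>m > 1\<close> neg[OF that]] \<open>x > 0\<close>
      unfolding F_def radial_flux_def by (simp add: mult_pos_neg)
    have "((\<lambda>x. (- F x) powr e) has_real_derivative e * (- F x) powr (e - 1) * - W x) (at x)"
      using DERIV_fun_powr[OF DERIV_minus[OF flux_deriv[OF that, folded F_def]] \<open>- F x > 0\<close>]
      by simp
    from DERIV_diff[OF DERIV_cmult[OF deriv[OF that], of \<rho>]
        DERIV_mult[OF has_real_derivative_powr[OF \<open>x > 0\<close>, of "- \<rho>"] this]]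
    have "(H has_real_derivative \<rho> * u' x - (- \<rho> * x powr (- \<rho> - 1) * (- F x) powr e
        + e * (- F x) powr (e - 1) * - W x * x powr (- \<rho>))) (at x)"
      unfolding H_def by simp
    moreover have "x powr (- \<rho> - 1) * (- F x) powr e = - u' x"
      using \<open>x > 0\<close> unfolding root[OF that] by (simp flip: powr_add)
    ultimately show ?thesis
      by (simp add: algebra_simps)
  qed
  have "e > 0"
    using \<open>m > 1\<close> unfolding e_def by simp
  then have "antimono_on {a<..} H"
    using H_deriv W_nonpos
    by (intro antimono_on_greaterThan_if_derivative_nonpos) (auto simp: mult_nonneg_nonpos)
  then show ?thesis
    using U_eq_H by (simp add: monotone_on_def)
qed

theorem lemma3p1:
  fixes N :: nat and m \<alpha> \<beta> s0 lam p :: real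
    and u u' :: "real \<Rightarrow> real"
  assumes "N \<ge> 1" and "m > 1"
    and "real N + \<alpha> - m > 0" and "\<beta> - \<alpha> + 1 > 0"
    and "s0 \<ge> 0" and "lam > 0" and "p > 0"
    and deriv_u: "\<forall>r\<ge>s0. (u has_real_derivative u' r) (at r within {s0..})"
    and cont_u': "continuous_on {s0<..} u'"
    and nonneg: "\<forall>r\<ge>s0. u r \<ge> 0"
    and ode: "\<forall>r>s0. ((\<lambda>t. t powr (real N + \<alpha> - 1) * (\<bar>u' t\<bar> powr (m - 2) * u' t))
                 has_real_derivative (- lam * r powr (real N + \<beta> - 1) * u r powr p)) (at r)"
    and "u s0 = 1" and "u' s0 \<le> 0"
  shows "(\<forall>r>s0. r * u' r + ((real N + \<alpha> - m) / (m - 1)) * u r \<ge> 0)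
       \<and> (\<forall>r t. s0 < r \<and> r \<le> t \<longrightarrow>
            t * u' t + ((real N + \<alpha> - m) / (m - 1)) * u t
              \<le> r * u' r + ((real N + \<alpha> - m) / (m - 1)) * u r)
       \<and> (\<forall>r t. s0 < r \<and> r \<le> t \<longrightarrow>
            r powr ((real N + \<alpha> - m) / (m - 1)) * u r
              \<le> t powr ((real N + \<alpha> - m) / (m - 1)) * u t)"
proof -
  define \<rho> where "\<rho> = (real N + \<alpha> - m) / (m - 1)"
  define k where "k = real N + \<alpha> - 1"
  have "\<rho> > 0" and k: "k = (\<rho> + 1) * (m - 1)" and "k \<ge> 0"
    using \<open>m > 1\<close> \<open>real N + \<alpha> - m > 0\<close> unfolding \<rho>_def k_def by (simp_all add: field_simps)
  have right_deriv: "(u has_real_derivative u' s0) (at s0 within {s0..})"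
    using deriv_u by simp
  have deriv: "(u has_real_derivative u' x) (at x)" if "x > s0" for x
    using deriv_u[rule_format, of x] that at_within_interior[of x "{s0..}"] by simp
  have cont: "continuous_on {s0..} u"
    using deriv_u by (auto simp: continuous_on_eq_continuous_within intro: DERIV_continuous)
  have flux_deriv: "(radial_flux k m u' has_real_derivative
      - lam * x powr (real N + \<beta> - 1) * u x powr p) (at x)" if "x > s0" for x
    using ode that unfolding radial_flux_def[abs_def] k_def by simp
  then have "antimono_on {s0<..} (radial_flux k m u')"
    using \<open>lam > 0\<close> by (intro antimono_on_greaterThan_if_derivative_nonpos) auto
  then have "u' x \<le> 0" if "x > s0" for x
    using derivative_nonpos_if_radial_flux_antimono[OF \<open>m > 1\<close> \<open>k \<ge> 0\<close> \<open>s0 \<ge> 0\<close> cont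
        right_deriv \<open>u' s0 \<le> 0\<close> deriv] that by blast
  then have "u' x < 0" if "x > s0" for x
    using derivative_neg_if_radial_flux_equation[OF \<open>m > 1\<close> \<open>s0 \<ge> 0\<close> \<open>lam > 0\<close> cont _
        deriv flux_deriv] \<open>u s0 = 1\<close> that by simp
  then have U_antimono: "antimono_on {s0<..} (\<lambda>x. x * u' x + \<rho> * u x)"
    using Euler_operator_antimono[OF \<open>m > 1\<close> \<open>s0 \<ge> 0\<close> k deriv _ flux_deriv] \<open>lam > 0\<close>
    by simp
  have U_nonneg: "x * u' x + \<rho> * u x \<ge> 0" if "x > s0" for x
    using Euler_operator_nonneg[OF \<open>\<rho> > 0\<close> \<open>s0 \<ge> 0\<close> deriv _ U_antimono that] nonneg by simp
  have "mono_on {s0<..} (\<lambda>x. x powr \<rho> * u x)"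
    using powr_mult_mono_if_Euler_operator_nonneg[OF \<open>s0 \<ge> 0\<close> deriv U_nonneg] by simp
  with U_antimono U_nonneg show ?thesis
    unfolding \<rho>_def[symmetric] by (auto simp: monotone_on_def)
qed

end
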